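(* If $G$ is a $2$-connected graph of order $n$ with girth $g$, then $F_c(G)\le n-g+2$.
   Context: Forcing process: given a set of initially colored vertices, at each step a colored vertex with exactly one non-colored neighbor forces (colors) that neighbor. A set $S\subseteq V(G)$ is a forcing set if iterating this process from $S$ eventually colors all vertices; it is a connected forcing set if moreover the induced subgraph $G[S]$ is connected. $F_c(G)$ is the minimum cardinality of a connected forcing set of $G$. The girth of $G$ is the length of a shortest cycle in $G$. *)

theory Defs
  imports Main
begin

definition simple_graph :: "'a set \<Rightarrow> ('a \<Rightarrow> 'a \<Rightarrow> bool) \<Rightarrow> bool" where
  "simple_graph V E \<longleftrightarrow> finite V \<and> (\<forall>x y. E x y \<longrightarrow> x \<in> V \<and> y \<in> V)
     \<and> (\<forall>x y. E x y \<longrightarrow> E y x) \<and> (\<forall>x. \<not> E x x)"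

definition induced_connected :: "('a \<Rightarrow> 'a \<Rightarrow> bool) \<Rightarrow> 'a set \<Rightarrow> bool" where
  "induced_connected E S \<longleftrightarrow>
     (\<forall>x\<in>S. \<forall>y\<in>S. (\<lambda>u v. E u v \<and> u \<in> S \<and> v \<in> S)\<^sup>*\<^sup>* x y)"

definition two_connected :: "'a set \<Rightarrow> ('a \<Rightarrow> 'a \<Rightarrow> bool) \<Rightarrow> bool" where
  "two_connected V E \<longleftrightarrow> card V \<ge> 3 \<and> induced_connected E V
     \<and> (\<forall>v\<in>V. induced_connected E (V - {v}))"

definition is_cycle :: "'a set \<Rightarrow> ('a \<Rightarrow> 'a \<Rightarrow> bool) \<Rightarrow> 'a list \<Rightarrow> bool" where
  "is_cycle V E cs \<longleftrightarrow> length cs \<ge> 3 \<and> distinct cs \<and> set cs \<subseteq> V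
     \<and> (\<forall>i < length cs. E (cs ! i) (cs ! ((i + 1) mod length cs)))"

definition girth :: "'a set \<Rightarrow> ('a \<Rightarrow> 'a \<Rightarrow> bool) \<Rightarrow> nat" where
  "girth V E = (LEAST k. \<exists>cs. is_cycle V E cs \<and> length cs = k)"

text \<open>Vertices eventually coloured by the forcing process started from S:
  a coloured vertex u all of whose neighbours other than w are coloured forces w.
  (The final coloured set of the process is this least closed set, independent of
  the order of forcings.)\<close>
inductive_set forced :: "('a \<Rightarrow> 'a \<Rightarrow> bool) \<Rightarrow> 'a set \<Rightarrow> 'a set"
  for E :: "'a \<Rightarrow> 'a \<Rightarrow> bool" and S :: "'a set" where
  init: "x \<in> S \<Longrightarrow> x \<in> forced E S"
| force: "u \<in> forced E S \<Longrightarrow> E u w \<Longrightarrow>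
          (\<forall>w'. E u w' \<and> w' \<noteq> w \<longrightarrow> w' \<in> forced E S) \<Longrightarrow> w \<in> forced E S"

definition forcing_set :: "'a set \<Rightarrow> ('a \<Rightarrow> 'a \<Rightarrow> bool) \<Rightarrow> 'a set \<Rightarrow> bool" where
  "forcing_set V E S \<longleftrightarrow> S \<subseteq> V \<and> V \<subseteq> forced E S"

definition connected_forcing_set :: "'a set \<Rightarrow> ('a \<Rightarrow> 'a \<Rightarrow> bool) \<Rightarrow> 'a set \<Rightarrow> bool" where
  "connected_forcing_set V E S \<longleftrightarrow> forcing_set V E S \<and> induced_connected E S"

definition Fc :: "'a set \<Rightarrow> ('a \<Rightarrow> 'a \<Rightarrow> bool) \<Rightarrow> nat" where
  "Fc V E = (LEAST k. \<exists>S. connected_forcing_set V E S \<and> card S = k)"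

end

theory Submission
  imports Defs
begin

text \<open>Take a normal (depth-first) spanning tree and a deepest vertex \<open>l\<close>. By
  2-connectedness \<open>l\<close> has a back edge, so the tree path from \<open>l\<close> upwards has at least
  \<open>g - 1\<close> edges, and its lowest \<open>g - 1\<close> vertices form an induced path, since a chord
  would close a cycle shorter than \<open>g\<close>. Deleting the lowest \<open>g - 2\<close> of them leaves a
  set \<open>S\<close> whose top vertex forces the path back down to \<open>l\<close>. \<open>S\<close> is connected because
  every vertex hanging off the path escapes its subtree through a back edge (the lowpoint
  argument), and by the maximal depth of \<open>l\<close> and the girth bound that back edge ends above
  the deleted part.\<close>

definition induced_adj :: "('a \<Rightarrow> 'a \<Rightarrow> bool) \<Rightarrow> 'a set \<Rightarrow> 'a \<Rightarrow> 'a \<Rightarrow> bool" where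
  "induced_adj E S u v \<longleftrightarrow> E u v \<and> u \<in> S \<and> v \<in> S"

lemma induced_connected_iff:
  "induced_connected E S \<longleftrightarrow> (\<forall>x\<in>S. \<forall>y\<in>S. (induced_adj E S)\<^sup>*\<^sup>* x y)"
proof -
  have "induced_adj E S = (\<lambda>u v. E u v \<and> u \<in> S \<and> v \<in> S)"
    by (auto simp: induced_adj_def fun_eq_iff)
  then show ?thesis by (simp add: induced_connected_def)
qed

lemma induced_adj_rtranclp_mono:
  assumes "(induced_adj E A)\<^sup>*\<^sup>* x y" "A \<subseteq> B"
  shows "(induced_adj E B)\<^sup>*\<^sup>* x y"
proof -
  have "induced_adj E A \<le> induced_adj E B" using assms(2) by (auto simp: induced_adj_def)
  then show ?thesis using assms(1) rtranclp_mono by blast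
qed

lemma induced_adj_rtranclp_mem:
  "(induced_adj E A)\<^sup>*\<^sup>* x y \<Longrightarrow> x \<in> A \<Longrightarrow> y \<in> A"
  by (induction rule: rtranclp_induct) (auto simp: induced_adj_def)

lemma induced_adj_rtranclp_sym:
  assumes "\<And>u v. E u v \<Longrightarrow> E v u" "(induced_adj E A)\<^sup>*\<^sup>* x y"
  shows "(induced_adj E A)\<^sup>*\<^sup>* y x"
proof -
  have "symp (induced_adj E A)" using assms(1) by (auto simp: symp_def induced_adj_def)
  then show ?thesis using assms(2) symp_rtranclp by (metis sympD)
qed

lemma induced_connectedI_root:
  assumes "\<And>u v. E u v \<Longrightarrow> E v u" "\<And>v. v \<in> S \<Longrightarrow> (induced_adj E S)\<^sup>*\<^sup>* v r"
  shows "induced_connected E S"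
  unfolding induced_connected_iff
  using assms induced_adj_rtranclp_sym rtranclp_trans by metis

lemma induced_adj_rtranclp_exit:
  "(induced_adj E A)\<^sup>*\<^sup>* x y \<Longrightarrow> x \<in> D \<Longrightarrow> y \<notin> D \<Longrightarrow>
   \<exists>a b. (induced_adj E (A \<inter> D))\<^sup>*\<^sup>* x a \<and> a \<in> D \<and> induced_adj E A a b \<and> b \<notin> D"
proof (induction rule: converse_rtranclp_induct)
  case base
  then show ?case by simp
next
  case (step x x')
  show ?case
  proof (cases "x' \<in> D")
    case True
    then obtain a b where ab: "(induced_adj E (A \<inter> D))\<^sup>*\<^sup>* x' a" "a \<in> D"
        "induced_adj E A a b" "b \<notin> D"
      using step.IH step.prems(2) by blast
    have "induced_adj E (A \<inter> D) x x'" using step.hyps(1) step.prems(1) True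
      by (auto simp: induced_adj_def)
    with ab show ?thesis by (meson converse_rtranclp_into_rtranclp)
  next
    case False
    then show ?thesis using step.hyps(1) step.prems(1) by blast
  qed
qed

lemma induced_connected_reachable:
  assumes sym: "\<And>u v. E u v \<Longrightarrow> E v u"
  shows "induced_connected E {v. (induced_adj E A)\<^sup>*\<^sup>* c v}"
proof (rule induced_connectedI_root[OF sym])
  let ?K = "{v. (induced_adj E A)\<^sup>*\<^sup>* c v}"
  fix v assume "v \<in> ?K"
  then have "(induced_adj E A)\<^sup>*\<^sup>* c v" by simp
  then have "(induced_adj E ?K)\<^sup>*\<^sup>* c v"
  proof (induction rule: rtranclp_induct)
    case (step y z)
    then have "induced_adj E ?K y z"
      by (auto simp: induced_adj_def intro: rtranclp.rtrancl_into_rtrancl)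
    with step.IH show ?case by (rule rtranclp.rtrancl_into_rtrancl)
  qed simp
  from induced_adj_rtranclp_sym[OF sym this] show "(induced_adj E ?K)\<^sup>*\<^sup>* v c" .
qed

text \<open>A walk to \<open>r\<close> cannot reach \<open>K\<close> except by stepping out of \<open>r\<close>, so its
  final stretch outside \<open>K\<close> stays in \<open>U - K\<close>.\<close>
lemma induced_connected_Diff_closed:
  assumes sym: "\<And>u v. E u v \<Longrightarrow> E v u" and conn: "induced_connected E U"
    and "r \<in> U" "K \<subseteq> U - {r}"
    and closed: "\<And>a b. a \<in> K \<Longrightarrow> b \<in> U - {r} \<Longrightarrow> E a b \<Longrightarrow> b \<in> K"
  shows "induced_connected E (U - K)"
proof (rule induced_connectedI_root[OF sym])
  have "(induced_adj E (U - K))\<^sup>*\<^sup>* v r"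
    if "(induced_adj E U)\<^sup>*\<^sup>* v r" "v \<in> U - K" for v
    using that
  proof (induction rule: converse_rtranclp_induct)
    case (step x x')
    show ?case
    proof (cases "x' \<in> K")
      case True
      then have "x = r" using step closed sym by (auto simp: induced_adj_def)
      then show ?thesis by simp
    next
      case False
      then have "induced_adj E (U - K) x x'" using step by (auto simp: induced_adj_def)
      with step False show ?thesis
        by (auto intro: converse_rtranclp_into_rtranclp simp: induced_adj_def)
    qed
  qed simp
  then show "(induced_adj E (U - K))\<^sup>*\<^sup>* v r" if "v \<in> U - K" for v
    using that \<open>r \<in> U\<close> conn by (auto simp: induced_connected_iff)
qed

definition rooted_tree ::
    "'a set \<Rightarrow> ('a \<Rightarrow> 'a \<Rightarrow> bool) \<Rightarrow> 'a \<Rightarrow> ('a \<Rightarrow> 'a) \<Rightarrow> ('a \<Rightarrow> nat) \<Rightarrow> bool" where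
  "rooted_tree U E r par dep \<longleftrightarrow> r \<in> U \<and> dep r = 0 \<and>
     (\<forall>v\<in>U. v \<noteq> r \<longrightarrow> par v \<in> U \<and> E v (par v) \<and> dep v = Suc (dep (par v)))"

definition ancestor :: "('a \<Rightarrow> 'a) \<Rightarrow> ('a \<Rightarrow> nat) \<Rightarrow> 'a \<Rightarrow> 'a \<Rightarrow> bool" where
  "ancestor par dep u v \<longleftrightarrow> (\<exists>i\<le>dep u. (par ^^ i) u = v)"

definition normal_tree ::
    "'a set \<Rightarrow> ('a \<Rightarrow> 'a \<Rightarrow> bool) \<Rightarrow> 'a \<Rightarrow> ('a \<Rightarrow> 'a) \<Rightarrow> ('a \<Rightarrow> nat) \<Rightarrow> bool" where
  "normal_tree U E r par dep \<longleftrightarrow> rooted_tree U E r par dep \<and>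
     (\<forall>u\<in>U. \<forall>v\<in>U. E u v \<longrightarrow> ancestor par dep u v \<or> ancestor par dep v u)"

lemma rooted_tree_funpow:
  assumes "rooted_tree U E r par dep" "v \<in> U" "i \<le> dep v"
  shows "(par ^^ i) v \<in> U \<and> dep ((par ^^ i) v) = dep v - i"
  using assms(3)
proof (induction i)
  case (Suc i)
  let ?w = "(par ^^ i) v"
  have w: "?w \<in> U" "dep ?w = dep v - i" using Suc by auto
  then have "?w \<noteq> r" using Suc.prems assms(1) by (auto simp: rooted_tree_def)
  then show ?case using w assms(1) by (auto simp: rooted_tree_def)
qed (use assms in simp)

lemma rooted_tree_depth_eq_0_iff:
  "rooted_tree U E r par dep \<Longrightarrow> v \<in> U \<Longrightarrow> dep v = 0 \<longleftrightarrow> v = r"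
  unfolding rooted_tree_def by auto

lemma funpow_cong_upto:
  assumes "\<And>j. j < i \<Longrightarrow> f ((g ^^ j) x) = g ((g ^^ j) x)"
  shows "(f ^^ i) x = (g ^^ i) x"
  using assms by (induction i) auto

lemma rooted_tree_funpow_cong:
  assumes tree: "rooted_tree U E r p d" and "v \<in> U" "i \<le> d v"
    and agree: "\<And>w. w \<in> U \<Longrightarrow> w \<noteq> r \<Longrightarrow> f w = p w"
  shows "(f ^^ i) v = (p ^^ i) v"
proof (rule funpow_cong_upto)
  fix j assume "j < i"
  then have w: "(p ^^ j) v \<in> U" "d ((p ^^ j) v) \<noteq> 0"
    using rooted_tree_funpow[OF tree \<open>v \<in> U\<close>, of j] \<open>i \<le> d v\<close> by auto
  then have "(p ^^ j) v \<noteq> r" using tree by (auto simp: rooted_tree_def)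
  with w show "f ((p ^^ j) v) = p ((p ^^ j) v)" using agree by blast
qed

lemma normal_tree_glue:
  fixes K W :: "'a set" and c r :: 'a and pK pW :: "'a \<Rightarrow> 'a" and dK dW :: "'a \<Rightarrow> nat"
  defines "par \<equiv> \<lambda>v. if v \<in> K then if v = c then r else pK v else pW v"
    and "dep \<equiv> \<lambda>v. if v \<in> K then Suc (dK v) else dW v"
  assumes K: "normal_tree K E c pK dK" and W: "normal_tree W E r pW dW"
    and "K \<inter> W = {}" "E c r"
    and cross: "\<And>a b. a \<in> K \<Longrightarrow> b \<in> W \<Longrightarrow> E a b \<Longrightarrow> b = r"
    and sym: "\<And>u v. E u v \<Longrightarrow> E v u"
  shows "normal_tree (K \<union> W) E r par dep"
proof -
  have tK: "rooted_tree K E c pK dK" and tW: "rooted_tree W E r pW dW"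
    using K W by (auto simp: normal_tree_def)
  have funpow_K: "(par ^^ i) v = (pK ^^ i) v" if "v \<in> K" "i \<le> dK v" for v i
    by (rule rooted_tree_funpow_cong[OF tK that]) (simp add: par_def)
  have funpow_W: "(par ^^ i) v = (pW ^^ i) v" if "v \<in> W" "i \<le> dW v" for v i
    by (rule rooted_tree_funpow_cong[OF tW that]) (use \<open>K \<inter> W = {}\<close> in \<open>auto simp: par_def\<close>)
  have anc_K: "ancestor par dep u v" if u: "u \<in> K" and anc: "ancestor pK dK u v" for u v
  proof -
    obtain i where "i \<le> dK u" "(pK ^^ i) u = v" using anc by (auto simp: ancestor_def)
    then show ?thesis using funpow_K[OF u] u
      unfolding ancestor_def dep_def by (intro exI[of _ i]) auto
  qed
  have anc_W: "ancestor par dep u v" if u: "u \<in> W" and anc: "ancestor pW dW u v" for u v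
  proof -
    obtain i where "i \<le> dW u" "(pW ^^ i) u = v" using anc by (auto simp: ancestor_def)
    then show ?thesis using funpow_W[OF u] u \<open>K \<inter> W = {}\<close>
      unfolding ancestor_def dep_def by (intro exI[of _ i]) auto
  qed
  have anc_root: "ancestor par dep u r" if "u \<in> K" for u
  proof -
    have "(pK ^^ dK u) u = c"
      using rooted_tree_funpow[OF tK that order.refl] rooted_tree_depth_eq_0_iff[OF tK] by auto
    then have "(par ^^ Suc (dK u)) u = r"
      using funpow_K[OF that order.refl] tK by (simp add: par_def rooted_tree_def)
    then show ?thesis using that by (auto simp: ancestor_def dep_def)
  qed
  have "rooted_tree (K \<union> W) E r par dep"
    using tK tW \<open>K \<inter> W = {}\<close> \<open>E c r\<close> by (auto simp: rooted_tree_def par_def dep_def)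
  moreover have "ancestor par dep u v \<or> ancestor par dep v u"
    if uv: "u \<in> K \<union> W" "v \<in> K \<union> W" and "E u v" for u v
  proof -
    consider "u \<in> K" "v \<in> K" | "u \<in> W" "v \<in> W" | "u \<in> K" "v \<in> W" | "u \<in> W" "v \<in> K"
      using uv by blast
    then show ?thesis
    proof cases
      case 1
      then show ?thesis using K \<open>E u v\<close> anc_K unfolding normal_tree_def by blast
    next
      case 2
      then show ?thesis using W \<open>E u v\<close> anc_W unfolding normal_tree_def by blast
    next
      case 3
      then show ?thesis using cross \<open>E u v\<close> anc_root by blast
    next
      case 4
      then show ?thesis using cross sym \<open>E u v\<close> anc_root by blast
    qed
  qed
  ultimately show ?thesis by (simp add: normal_tree_def)
qed

text \<open>Split off the component \<open>K\<close> of \<open>U - {r}\<close> containing a neighbour \<open>c\<close> of \<open>r\<close>;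
  both \<open>K\<close> and \<open>U - K\<close> are connected and smaller, and their normal trees glue.\<close>
lemma normal_tree_exists:
  assumes "finite U" "induced_connected E U" "r \<in> U"
    and sym: "\<And>u v. E u v \<Longrightarrow> E v u" and irr: "\<And>x. \<not> E x x"
  shows "\<exists>par dep. normal_tree U E r par dep"
  using assms(1-3)
proof (induction "card U" arbitrary: U r rule: less_induct)
  case less
  show ?case
  proof (cases "U = {r}")
    case True
    then have "normal_tree U E r id (\<lambda>_. 0)"
      by (auto simp: normal_tree_def rooted_tree_def ancestor_def)
    then show ?thesis by blast
  next
    case False
    then obtain z where "z \<in> U" "z \<noteq> r" using less.prems by blast
    then have "(induced_adj E U)\<^sup>*\<^sup>* r z" using less.prems by (simp add: induced_connected_iff)
    then obtain c where "induced_adj E U r c" using \<open>z \<noteq> r\<close>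
      by (cases rule: converse_rtranclpE) auto
    then have c: "c \<in> U - {r}" "E c r" using irr sym by (auto simp: induced_adj_def)
    define K where "K = {v. (induced_adj E (U - {r}))\<^sup>*\<^sup>* c v}"
    have KU: "K \<subseteq> U - {r}" using induced_adj_rtranclp_mem c(1) by (fastforce simp: K_def)
    have closed: "b \<in> K" if "a \<in> K" "b \<in> U - {r}" "E a b" for a b
    proof -
      have "induced_adj E (U - {r}) a b" using that KU by (auto simp: induced_adj_def)
      with \<open>a \<in> K\<close> show ?thesis by (auto simp: K_def intro: rtranclp.rtrancl_into_rtrancl)
    qed
    have "c \<in> K" by (simp add: K_def)
    have "card K < card U" "card (U - K) < card U"
      using KU \<open>c \<in> K\<close> c(1) less.prems by (auto intro: psubset_card_mono)
    moreover have "induced_connected E K"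
      unfolding K_def by (rule induced_connected_reachable[OF sym])
    moreover have "induced_connected E (U - K)"
      by (rule induced_connected_Diff_closed[OF sym less.prems(2,3) KU closed])
    moreover have "finite K" "finite (U - K)" "r \<in> U - K" using KU less.prems finite_subset by auto
    ultimately obtain pK dK pW dW where
      "normal_tree K E c pK dK" "normal_tree (U - K) E r pW dW"
      using less.hyps \<open>c \<in> K\<close> by meson
    from normal_tree_glue[OF this _ \<open>E c r\<close>] have "\<exists>par dep. normal_tree (K \<union> (U - K)) E r par dep"
      using closed sym by blast
    moreover have "K \<union> (U - K) = U" using KU by blast
    ultimately show ?thesis by simp
  qed
qed

lemma girth_le_length: "is_cycle V E cs \<Longrightarrow> girth V E \<le> length cs"
  unfolding girth_def by (rule Least_le) blast

lemma girth_ge_3: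
  assumes "is_cycle V E cs"
  shows "3 \<le> girth V E"
proof -
  have "\<exists>cs. is_cycle V E cs \<and> length cs = girth V E"
    unfolding girth_def by (rule LeastI_ex) (use assms in blast)
  then show ?thesis by (auto simp: is_cycle_def)
qed

lemma girth_le_card:
  assumes "finite V" "is_cycle V E cs"
  shows "girth V E \<le> card V"
proof -
  have "length cs = card (set cs)" using assms(2) by (simp add: is_cycle_def distinct_card)
  also have "\<dots> \<le> card V" using assms by (intro card_mono) (auto simp: is_cycle_def)
  finally show ?thesis using girth_le_length[OF assms(2)] by simp
qed

lemma Fc_le_card: "connected_forcing_set V E S \<Longrightarrow> Fc V E \<le> card S"
  unfolding Fc_def by (rule Least_le) blast

text \<open>Along an induced path \<open>x 0, \<dots>, x k\<close>, each \<open>x (Suc i)\<close> has \<open>x i\<close> as its only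
  neighbour not already coloured, so \<open>x k\<close> forces the whole path backwards.\<close>
lemma forcing_set_Diff_induced_path:
  assumes graph: "simple_graph V E"
    and path: "\<And>i. i < k \<Longrightarrow> E (x i) (x (Suc i))"
    and chordless: "\<And>a b. a + 2 \<le> b \<Longrightarrow> b \<le> k \<Longrightarrow> \<not> E (x a) (x b)"
    and end_in: "x k \<in> V - x ` {..<k}"
  shows "forcing_set V E (V - x ` {..<k})"
proof -
  let ?S = "V - x ` {..<k}"
  have Ein: "\<And>u v. E u v \<Longrightarrow> u \<in> V \<and> v \<in> V" and sym: "\<And>u v. E u v \<Longrightarrow> E v u"
    using graph by (auto simp: simple_graph_def)
  have "x i \<in> forced E ?S" if "i \<le> k" for i
    using that
  proof (induction "k - i" arbitrary: i rule: less_induct)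
    case less
    show ?case
    proof (cases "i = k")
      case True
      then show ?thesis using end_in by (simp add: forced.init)
    next
      case False
      then have "i < k" using less.prems by simp
      have "w \<in> forced E ?S" if w: "E (x (Suc i)) w" "w \<noteq> x i" for w
      proof (cases "w \<in> ?S")
        case True
        then show ?thesis by (rule forced.init)
      next
        case False
        then obtain j where "j < k" "w = x j" using w Ein by auto
        moreover have "\<not> j < i" using chordless[of j "Suc i"] w \<open>i < k\<close> sym \<open>w = x j\<close> by auto
        moreover have "j \<noteq> i" using w \<open>w = x j\<close> by auto
        ultimately have "i < j" "j < k" "w = x j" by auto
        then show ?thesis using less.hyps[of j] by simp
      qed
      moreover have "x (Suc i) \<in> forced E ?S" using less.hyps[of "Suc i"] \<open>i < k\<close> by simp
      ultimately show ?thesis using forced.force sym path[OF \<open>i < k\<close>] by metis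
    qed
  qed
  moreover have "v \<in> forced E ?S" if "v \<in> ?S" for v using that by (rule forced.init)
  ultimately have "V \<subseteq> forced E ?S" by force
  then show ?thesis by (simp add: forcing_set_def)
qed

locale normal_spanning_tree =
  fixes V :: "'a set" and E :: "'a \<Rightarrow> 'a \<Rightarrow> bool" and r :: 'a
    and par :: "'a \<Rightarrow> 'a" and dep :: "'a \<Rightarrow> nat"
  assumes graph: "simple_graph V E" and normal: "normal_tree V E r par dep"
begin

lemma sym: "E u v \<Longrightarrow> E v u" and irrefl: "\<not> E v v"
  using graph by (auto simp: simple_graph_def)

lemma tree: "rooted_tree V E r par dep"
  using normal by (simp add: normal_tree_def)

lemma parent: "v \<in> V \<Longrightarrow> v \<noteq> r \<Longrightarrow> par v \<in> V \<and> E v (par v) \<and> dep v = Suc (dep (par v))"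
  using tree by (simp add: rooted_tree_def)

lemma funpow_mem: "v \<in> V \<Longrightarrow> i \<le> dep v \<Longrightarrow> (par ^^ i) v \<in> V"
  using rooted_tree_funpow[OF tree] by blast

lemma dep_funpow: "v \<in> V \<Longrightarrow> i \<le> dep v \<Longrightarrow> dep ((par ^^ i) v) = dep v - i"
  using rooted_tree_funpow[OF tree] by blast

lemma dep_eq_0_iff: "v \<in> V \<Longrightarrow> dep v = 0 \<longleftrightarrow> v = r"
  using rooted_tree_depth_eq_0_iff[OF tree] .

lemma edge_ancestor:
  "u \<in> V \<Longrightarrow> v \<in> V \<Longrightarrow> E u v \<Longrightarrow> ancestor par dep u v \<or> ancestor par dep v u"
  using normal by (simp add: normal_tree_def)

lemma funpow_ne_root:
  assumes "v \<in> V" "i < dep v"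
  shows "(par ^^ i) v \<noteq> r"
proof -
  have "dep ((par ^^ i) v) \<noteq> 0" using dep_funpow assms by simp
  then show ?thesis using assms dep_eq_0_iff funpow_mem by (metis less_imp_le)
qed

lemma funpow_edge: "v \<in> V \<Longrightarrow> i < dep v \<Longrightarrow> E ((par ^^ i) v) ((par ^^ Suc i) v)"
  using parent funpow_mem funpow_ne_root by simp

lemma funpow_inj: "v \<in> V \<Longrightarrow> inj_on (\<lambda>i. (par ^^ i) v) {..dep v}"
  by (rule inj_onI) (metis atMost_iff dep_funpow diff_diff_cancel)

lemma ancestor_trans:
  assumes "u \<in> V" "ancestor par dep u v" "ancestor par dep v w"
  shows "ancestor par dep u w"
proof -
  obtain i j where "i \<le> dep u" "(par ^^ i) u = v" "j \<le> dep v" "(par ^^ j) v = w"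
    using assms(2,3) by (auto simp: ancestor_def)
  moreover have "dep v = dep u - i" using calculation dep_funpow[OF assms(1)] by blast
  ultimately show ?thesis unfolding ancestor_def
    by (intro exI[of _ "j + i"]) (auto simp: funpow_add)
qed

lemma ancestor_linear:
  assumes "u \<in> V" "ancestor par dep u v" "ancestor par dep u w"
  shows "ancestor par dep v w \<or> ancestor par dep w v"
proof -
  obtain i j where i: "i \<le> dep u" "(par ^^ i) u = v" and j: "j \<le> dep u" "(par ^^ j) u = w"
    using assms(2,3) by (auto simp: ancestor_def)
  have "ancestor par dep v w" if "i \<le> j"
  proof -
    have "(par ^^ (j - i)) v = w" using i(2) j(2) that by (metis funpow_add le_add_diff_inverse2 o_apply)
    moreover have "j - i \<le> dep v" using dep_funpow[OF assms(1) i(1)] i(2) j(1) by simp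
    ultimately show ?thesis by (auto simp: ancestor_def)
  qed
  moreover have "ancestor par dep w v" if "j \<le> i"
  proof -
    have "(par ^^ (i - j)) w = v" using i(2) j(2) that by (metis funpow_add le_add_diff_inverse2 o_apply)
    moreover have "i - j \<le> dep w" using dep_funpow[OF assms(1) j(1)] j(2) i(1) by simp
    ultimately show ?thesis by (auto simp: ancestor_def)
  qed
  ultimately show ?thesis by linarith
qed

lemma ancestor_path_is_cycle:
  assumes y: "y \<in> V" and "2 \<le> d" "d \<le> dep y" and edge: "E y ((par ^^ d) y)"
  shows "is_cycle V E (map (\<lambda>i. (par ^^ i) y) [0..<Suc d])" (is "is_cycle V E ?cs")
proof -
  have "{0..<Suc d} \<subseteq> {..dep y}" using \<open>d \<le> dep y\<close> by auto
  then have "distinct ?cs"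
    using inj_on_subset[OF funpow_inj[OF y]] by (simp add: distinct_map del: upt_Suc)
  moreover have "set ?cs \<subseteq> V" using funpow_mem[OF y] \<open>d \<le> dep y\<close> by auto
  moreover have "E (?cs ! i) (?cs ! ((i + 1) mod length ?cs))" if "i < length ?cs" for i
  proof (cases "i < d")
    case True
    then have "E ((par ^^ i) y) ((par ^^ Suc i) y)" using funpow_edge[OF y] \<open>d \<le> dep y\<close> by simp
    then show ?thesis using True by (simp add: nth_append del: upt_Suc)
  next
    case False
    then have "i = d" using that by simp
    then show ?thesis using sym[OF edge] by (simp del: upt_Suc)
  qed
  ultimately show ?thesis using \<open>2 \<le> d\<close> by (auto simp: is_cycle_def)
qed

lemma girth_le_back_edge:
  "y \<in> V \<Longrightarrow> 2 \<le> d \<Longrightarrow> d \<le> dep y \<Longrightarrow> E y ((par ^^ d) y) \<Longrightarrow> girth V E \<le> Suc d"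
  using girth_le_length[OF ancestor_path_is_cycle] by fastforce

lemma ancestor_refl: "ancestor par dep v v"
  by (auto simp: ancestor_def intro: exI[of _ 0])

lemma ancestor_mem: "u \<in> V \<Longrightarrow> ancestor par dep u v \<Longrightarrow> v \<in> V"
  using funpow_mem by (auto simp: ancestor_def)

lemma ancestor_dep_ge_imp_eq:
  assumes "u \<in> V" "ancestor par dep u v" "dep u \<le> dep v"
  shows "v = u"
proof -
  obtain i where "i \<le> dep u" "(par ^^ i) u = v" using assms(2) by (auto simp: ancestor_def)
  moreover from this have "i = 0" using dep_funpow[OF assms(1)] assms(3) by fastforce
  ultimately show ?thesis by simp
qed

text \<open>2-connectedness gives a deepest vertex a neighbour other than its parent; having
  no descendants, that neighbour must be an ancestor by normality.\<close>
lemma deepest_back_edge: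
  assumes conn2: "two_connected V E" and l: "l \<in> V"
    and deepest: "\<And>v. v \<in> V \<Longrightarrow> dep v \<le> dep l"
  obtains d where "2 \<le> d" "d \<le> dep l" "E l ((par ^^ d) l)"
proof -
  have card: "3 \<le> card V" and fin: "finite V" using conn2 graph
    by (auto simp: two_connected_def simple_graph_def)
  have "l \<noteq> r"
  proof
    assume "l = r"
    then have "dep l = 0" using dep_eq_0_iff l by simp
    then have "v = r" if "v \<in> V" for v using deepest[OF that] dep_eq_0_iff[OF that] by simp
    then have "V \<subseteq> {r}" by blast
    then show False using card card_mono[of "{r}" V] by simp
  qed
  then have pl: "par l \<in> V" "E l (par l)" using parent l by auto
  obtain z where z: "z \<in> V" "z \<noteq> par l" "z \<noteq> l"
  proof -
    have "card {par l, l} \<le> 2" by (simp add: card_insert_if)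
    then have "\<not> V \<subseteq> {par l, l}" using card card_mono[of "{par l, l}" V] by auto
    then show ?thesis using that by blast
  qed
  have "l \<noteq> par l" using pl(2) irrefl by metis
  moreover have "induced_connected E (V - {par l})" using conn2 pl(1) by (simp add: two_connected_def)
  ultimately have "(induced_adj E (V - {par l}))\<^sup>*\<^sup>* l z"
    using z l by (auto simp: induced_connected_iff)
  then obtain w where "induced_adj E (V - {par l}) l w" using \<open>z \<noteq> l\<close>
    by (cases rule: converse_rtranclpE) auto
  then have w: "E l w" "w \<in> V" "w \<noteq> par l" by (auto simp: induced_adj_def)
  have "ancestor par dep l w"
    using edge_ancestor[OF l w(2,1)] ancestor_dep_ge_imp_eq[OF w(2) _ deepest[OF w(2)]] irrefl w(1)
    by blast
  then obtain d where d: "d \<le> dep l" "(par ^^ d) l = w" by (auto simp: ancestor_def)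
  moreover have "d \<noteq> 0" using d(2) w(1) irrefl by (cases d) auto
  moreover have "d \<noteq> 1" using d(2) w(3) by auto
  ultimately have "2 \<le> d" by simp
  then show ?thesis using that d w(1) by blast
qed

lemma ex_deepest:
  obtains l where "l \<in> V" "\<And>v. v \<in> V \<Longrightarrow> dep v \<le> dep l"
proof -
  have fin: "finite (dep ` V)" and ne: "dep ` V \<noteq> {}"
    using graph tree by (auto simp: simple_graph_def rooted_tree_def)
  obtain l where l: "l \<in> V" "dep l = Max (dep ` V)" using Max_in[OF fin ne] by auto
  show ?thesis
  proof (rule that[OF l(1)])
    show "dep v \<le> dep l" if "v \<in> V" for v using Max_ge[OF fin] l(2) that by simp
  qed
qed

lemma girth_bounds_deepest:
  assumes "two_connected V E" "l \<in> V" "\<And>v. v \<in> V \<Longrightarrow> dep v \<le> dep l"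
  shows "3 \<le> girth V E" and "girth V E \<le> card V" and "girth V E \<le> Suc (dep l)"
proof -
  obtain d where d: "2 \<le> d" "d \<le> dep l" "E l ((par ^^ d) l)"
    using deepest_back_edge[OF assms] .
  note cycle = ancestor_path_is_cycle[OF assms(2) d]
  show "3 \<le> girth V E" using girth_ge_3[OF cycle] .
  show "girth V E \<le> card V" using girth_le_card[OF _ cycle] graph by (simp add: simple_graph_def)
  show "girth V E \<le> Suc (dep l)" using girth_le_back_edge[OF assms(2) d] d(2) by simp
qed

definition descendants :: "'a \<Rightarrow> 'a set" where
  "descendants v = {u \<in> V. ancestor par dep u v}"

text \<open>The lowpoint property: by 2-connectedness a walk from \<open>v\<close> to \<open>r\<close> avoiding
  \<open>par v\<close> must leave the subtree of \<open>v\<close>, and by normality it can only do so along a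
  back edge to a proper ancestor of \<open>par v\<close>.\<close>
lemma back_edge_above_parent:
  assumes conn2: "two_connected V E" and v: "v \<in> V" "v \<noteq> r" and "par v \<noteq> r"
  obtains a b where "(induced_adj E (descendants v))\<^sup>*\<^sup>* v a" "a \<in> descendants v"
    "E a b" "ancestor par dep a b" "dep b < dep (par v)"
proof -
  let ?p = "par v" and ?D = "descendants v"
  have p: "?p \<in> V" "E v ?p" "dep v = Suc (dep ?p)" using parent v by auto
  have "r \<in> V" using tree by (simp add: rooted_tree_def)
  moreover have "v \<noteq> ?p" using p(2) irrefl by metis
  moreover have "induced_connected E (V - {?p})" using conn2 p(1) by (simp add: two_connected_def)
  ultimately have "(induced_adj E (V - {?p}))\<^sup>*\<^sup>* v r"
    using v \<open>?p \<noteq> r\<close> by (auto simp: induced_connected_iff)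
  moreover have "v \<in> ?D" using v ancestor_refl by (simp add: descendants_def)
  moreover have "r \<notin> ?D"
  proof -
    have "dep r = 0" using dep_eq_0_iff \<open>r \<in> V\<close> by simp
    then show ?thesis using v by (auto simp: descendants_def ancestor_def)
  qed
  ultimately obtain a b where walk: "(induced_adj E ((V - {?p}) \<inter> ?D))\<^sup>*\<^sup>* v a"
    and a: "a \<in> ?D" and "induced_adj E (V - {?p}) a b" and "b \<notin> ?D"
    using induced_adj_rtranclp_exit by metis
  then have b: "E a b" "b \<in> V" "b \<noteq> ?p" and "a \<in> V" "ancestor par dep a v"
    by (auto simp: induced_adj_def descendants_def)
  have not_below: "\<not> ancestor par dep b v" using \<open>b \<notin> ?D\<close> b(2) by (simp add: descendants_def)
  have "ancestor par dep a b"
    using edge_ancestor[OF \<open>a \<in> V\<close> b(2,1)] ancestor_trans[OF b(2) _ \<open>ancestor par dep a v\<close>] not_below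
    by blast
  then have "ancestor par dep v b"
    using ancestor_linear[OF \<open>a \<in> V\<close> \<open>ancestor par dep a v\<close>] not_below by blast
  then obtain n where n: "n \<le> dep v" "(par ^^ n) v = b" by (auto simp: ancestor_def)
  moreover have "n \<noteq> 0" using n(2) \<open>b \<notin> ?D\<close> \<open>v \<in> ?D\<close> by (cases n) auto
  moreover have "n \<noteq> 1" using n(2) b(3) by auto
  ultimately have "dep b < dep ?p" using dep_funpow[OF v(1) n(1)] p(3) by simp
  moreover have "(induced_adj E ?D)\<^sup>*\<^sup>* v a" using walk by (rule induced_adj_rtranclp_mono) blast
  ultimately show ?thesis using that a b(1) \<open>ancestor par dep a b\<close> by blast
qed

definition lower_ancestors :: "'a \<Rightarrow> nat \<Rightarrow> 'a set" where
  "lower_ancestors l k = (\<lambda>i. (par ^^ i) l) ` {..<k}"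

lemma card_Diff_lower_ancestors:
  assumes "l \<in> V" "k \<le> dep l"
  shows "card (V - lower_ancestors l k) = card V - k"
proof -
  have "lower_ancestors l k \<subseteq> V" using funpow_mem assms by (auto simp: lower_ancestors_def)
  moreover have "card (lower_ancestors l k) = k"
    unfolding lower_ancestors_def using assms
    by (subst card_image) (auto intro: inj_on_subset[OF funpow_inj])
  moreover have "finite V" using graph by (simp add: simple_graph_def)
  ultimately show ?thesis using card_Diff_subset[OF finite_subset] by metis
qed

text \<open>A chord of the tree path from \<open>l\<close> upwards is a back edge, closing a cycle shorter
  than the girth.\<close>
lemma forcing_set_Diff_lower_ancestors:
  assumes l: "l \<in> V" and "k \<le> dep l" "k + 2 \<le> girth V E"
  shows "forcing_set V E (V - lower_ancestors l k)"
  unfolding lower_ancestors_def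
proof (rule forcing_set_Diff_induced_path[OF graph])
  let ?x = "\<lambda>i. (par ^^ i) l"
  show "E (?x i) (?x (Suc i))" if "i < k" for i
    using funpow_edge[OF l] that \<open>k \<le> dep l\<close> by simp
  show "\<not> E (?x a) (?x b)" if "a + 2 \<le> b" "b \<le> k" for a b
  proof
    assume "E (?x a) (?x b)"
    moreover have "?x b = (par ^^ (b - a)) (?x a)"
    proof -
      have "b = (b - a) + a" using that(1) by simp
      then show ?thesis by (metis funpow_add o_apply)
    qed
    moreover have "?x a \<in> V" "b - a \<le> dep (?x a)"
      using funpow_mem[OF l] dep_funpow[OF l, of a] that \<open>k \<le> dep l\<close> by auto
    ultimately have "girth V E \<le> Suc (b - a)" using girth_le_back_edge that(1) by simp
    then show False using that \<open>k + 2 \<le> girth V E\<close> by linarith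
  qed
  have "?x k \<notin> ?x ` {..<k}"
    using inj_onD[OF funpow_inj[OF l]] \<open>k \<le> dep l\<close> by fastforce
  then show "?x k \<in> V - ?x ` {..<k}" using funpow_mem[OF l \<open>k \<le> dep l\<close>] by simp
qed

text \<open>A path vertex below \<open>v\<close> would put \<open>v\<close> itself on the path, just below \<open>par v\<close>.\<close>
lemma descendants_disjoint_lower_ancestors:
  assumes l: "l \<in> V" and "k \<le> dep l" and v: "v \<in> V" "v \<noteq> r"
    and "v \<notin> lower_ancestors l k" "par v \<in> lower_ancestors l k"
  shows "descendants v \<inter> lower_ancestors l k = {}"
proof (rule ccontr)
  assume "descendants v \<inter> lower_ancestors l k \<noteq> {}"
  then obtain j m where j: "j < k" and m: "m \<le> dep ((par ^^ j) l)" "(par ^^ m) ((par ^^ j) l) = v"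
    by (auto simp: descendants_def lower_ancestors_def ancestor_def)
  have dep_j: "dep ((par ^^ j) l) = dep l - j" using dep_funpow[OF l] j \<open>k \<le> dep l\<close> by simp
  have v_eq: "v = (par ^^ (m + j)) l" using m(2) by (simp add: funpow_add)
  have "dep v \<noteq> 0" using dep_eq_0_iff v by simp
  then have "m + j < dep l" using v_eq dep_funpow[OF l, of "m + j"] m(1) dep_j j \<open>k \<le> dep l\<close> by simp
  obtain i where i: "i < k" "par v = (par ^^ i) l"
    using \<open>par v \<in> lower_ancestors l k\<close> by (auto simp: lower_ancestors_def)
  have "par v = (par ^^ Suc (m + j)) l" using v_eq by simp
  then have "i = Suc (m + j)"
    using inj_onD[OF funpow_inj[OF l]] i \<open>k \<le> dep l\<close> \<open>m + j < dep l\<close> by simp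
  then have "v \<in> lower_ancestors l k" using v_eq i(1) by (auto simp: lower_ancestors_def)
  then show False using \<open>v \<notin> lower_ancestors l k\<close> by contradiction
qed

text \<open>The cycle closed by the back edge would be shorter than the girth, since \<open>a\<close> is
  no deeper than \<open>l\<close>.\<close>
lemma long_back_edge_not_lower_ancestor:
  assumes l: "l \<in> V" and deepest: "\<And>v. v \<in> V \<Longrightarrow> dep v \<le> dep l"
    and "k \<le> dep l" "k + 2 \<le> girth V E"
    and a: "a \<in> V" and "E a b" "ancestor par dep a b" and "dep b + 2 \<le> dep a"
  shows "b \<notin> lower_ancestors l k"
proof
  assume "b \<in> lower_ancestors l k"
  then obtain j where "j < k" "b = (par ^^ j) l" by (auto simp: lower_ancestors_def)
  then have dep_b: "dep b = dep l - j" using dep_funpow[OF l] \<open>k \<le> dep l\<close> by simp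
  obtain n where n: "n \<le> dep a" "(par ^^ n) a = b"
    using \<open>ancestor par dep a b\<close> by (auto simp: ancestor_def)
  have "dep b = dep a - n" using dep_funpow[OF a n(1)] n(2) by simp
  then have "2 \<le> n" using \<open>dep b + 2 \<le> dep a\<close> by linarith
  then have "girth V E \<le> Suc n" using girth_le_back_edge[OF a _ n(1)] n(2) \<open>E a b\<close> by simp
  then show False
    using deepest[OF a] dep_b \<open>dep b = dep a - n\<close> n(1) \<open>j < k\<close> \<open>k \<le> dep l\<close> \<open>k + 2 \<le> girth V E\<close>
    by linarith
qed

text \<open>By induction on depth every remaining vertex reaches the root: a vertex whose parent
  was deleted escapes its subtree through a back edge, whose upper end survives.\<close>
lemma induced_connected_Diff_lower_ancestors:
  assumes conn2: "two_connected V E" and l: "l \<in> V"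
    and deepest: "\<And>v. v \<in> V \<Longrightarrow> dep v \<le> dep l"
    and "k \<le> dep l" "k + 2 \<le> girth V E"
  shows "induced_connected E (V - lower_ancestors l k)"
proof -
  let ?P = "lower_ancestors l k"
  let ?S = "V - ?P"
  have "(induced_adj E ?S)\<^sup>*\<^sup>* v r" if "v \<in> ?S" for v
    using that
  proof (induction "dep v" arbitrary: v rule: less_induct)
    case less
    then have v: "v \<in> V" "v \<notin> ?P" by auto
    consider "v = r" | "v \<noteq> r" "par v \<in> ?S" | "v \<noteq> r" "par v \<in> ?P"
      using parent[OF v(1)] by blast
    then show ?case
    proof cases
      case 1
      then show ?thesis by simp
    next
      case 2
      then have "induced_adj E ?S v (par v)" "dep (par v) < dep v"
        using parent[OF v(1)] less.prems by (auto simp: induced_adj_def)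
      then show ?thesis using less.hyps 2(2) by (meson converse_rtranclp_into_rtranclp)
    next
      case 3
      then obtain i where i: "i < k" "par v = (par ^^ i) l" by (auto simp: lower_ancestors_def)
      then have "par v \<noteq> r" using funpow_ne_root[OF l] \<open>k \<le> dep l\<close> by simp
      then obtain a b where walk: "(induced_adj E (descendants v))\<^sup>*\<^sup>* v a"
        and a: "a \<in> descendants v" and ab: "E a b" "ancestor par dep a b"
        and dep_b: "dep b < dep (par v)"
        using back_edge_above_parent[OF conn2 v(1) 3(1)] by blast
      have "descendants v \<subseteq> ?S"
        using descendants_disjoint_lower_ancestors[OF l \<open>k \<le> dep l\<close> v(1) 3(1) v(2) 3(2)]
        by (auto simp: descendants_def)
      then have walk_S: "(induced_adj E ?S)\<^sup>*\<^sup>* v a" and "a \<in> ?S"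
        using walk a induced_adj_rtranclp_mono by auto
      have "a \<in> V" "dep v \<le> dep a" using a dep_funpow by (auto simp: descendants_def ancestor_def)
      have dep_v: "dep v = Suc (dep (par v))" using parent[OF v(1) 3(1)] by simp
      have "b \<in> V" using ancestor_mem[OF \<open>a \<in> V\<close> ab(2)] .
      moreover have "b \<notin> ?P"
        using long_back_edge_not_lower_ancestor[OF l deepest \<open>k \<le> dep l\<close> \<open>k + 2 \<le> girth V E\<close>
            \<open>a \<in> V\<close> ab] dep_b dep_v \<open>dep v \<le> dep a\<close>
        by simp
      ultimately have "b \<in> ?S" by simp
      then have "(induced_adj E ?S)\<^sup>*\<^sup>* b r" using less.hyps dep_b dep_v by simp
      moreover have "induced_adj E ?S a b" using \<open>a \<in> ?S\<close> \<open>b \<in> ?S\<close> ab(1) by (simp add: induced_adj_def)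
      ultimately show ?thesis using walk_S by (meson converse_rtranclp_into_rtranclp rtranclp_trans)
    qed
  qed
  then show ?thesis using sym by (blast intro: induced_connectedI_root)
qed

lemma connected_forcing_set_Diff_lower_ancestors:
  assumes "two_connected V E" "l \<in> V" "\<And>v. v \<in> V \<Longrightarrow> dep v \<le> dep l"
    and "k \<le> dep l" "k + 2 \<le> girth V E"
  shows "connected_forcing_set V E (V - lower_ancestors l k)"
  using forcing_set_Diff_lower_ancestors[OF assms(2,4,5)]
    induced_connected_Diff_lower_ancestors[OF assms]
  by (simp add: connected_forcing_set_def)

end

theorem theorem3:
  fixes V :: "'a set" and E :: "'a \<Rightarrow> 'a \<Rightarrow> bool"
  assumes "simple_graph V E"
    and "two_connected V E"
  shows "Fc V E \<le> card V - girth V E + 2"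
proof -
  have fin: "finite V" and sym: "\<And>u v. E u v \<Longrightarrow> E v u" and irr: "\<And>v. \<not> E v v"
    using assms(1) by (auto simp: simple_graph_def)
  obtain r where "r \<in> V" using assms(2) by (force simp: two_connected_def)
  moreover have "induced_connected E V" using assms(2) by (simp add: two_connected_def)
  ultimately obtain par dep where "normal_tree V E r par dep"
    using normal_tree_exists[of V E r, OF fin _ _ sym irr] by blast
  then interpret T: normal_spanning_tree V E r par dep
    using assms(1) by unfold_locales
  obtain l where l: "l \<in> V" and deepest: "\<And>v. v \<in> V \<Longrightarrow> dep v \<le> dep l"
    using T.ex_deepest by blast
  note girth = T.girth_bounds_deepest[OF assms(2) l deepest]
  define k where "k = girth V E - 2"
  have "k \<le> dep l" "k + 2 \<le> girth V E" using girth by (auto simp: k_def)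
  then have "connected_forcing_set V E (V - T.lower_ancestors l k)"
    using T.connected_forcing_set_Diff_lower_ancestors[OF assms(2) l deepest] by blast
  then have "Fc V E \<le> card (V - T.lower_ancestors l k)" by (rule Fc_le_card)
  also have "\<dots> = card V - k" using T.card_Diff_lower_ancestors[OF l \<open>k \<le> dep l\<close>] .
  finally show ?thesis using girth by (simp add: k_def)
qed

end
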